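(* Let $T$ be a decomposition tree of a distance-hereditary graph $G$ and let $v$ be an internal node of $T$. Suppose that (1) $\hat\gamma_0(v)=\hat{min}(v)+\hat\alpha(v)$; (2) $\hat\gamma_{|\hat{TS}(v)|}(v)=\hat{min}(v)+|\hat{TS}(v)|-\hat\beta(v)$; and (3) $\hat\gamma_{\hat\alpha(v)+2i}(v)=\hat{min}(v)$ for all integers $0\le i\le(\hat\beta(v)-\hat\alpha(v))/2$. Then for every integer $0\le k\le|\hat{TS}(v)|$, $$\hat\gamma_k(v)=\begin{cases}\hat{min}(v)+\hat\alpha(v)-k & \text{if } 0\le k\le\hat\alpha(v),\\ \hat{min}(v)+k-\hat\beta(v) & \text{if } \hat\beta(v)\le k\le|\hat{TS}(v)|,\\ \hat{min}(v) & \text{if } \hat\alpha(v)<k<\hat\beta(v)\text{ and } k-\hat\alpha(v)\text{ is even},\\ \hat{min}(v)+1 & \text{otherwise.}\end{cases}$$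
   Context: All graphs are finite, simple, undirected. For a graph $H$ and $S\subseteq V(H)$, $N_H[S]$ is $S$ together with all vertices adjacent to a vertex of $S$, and $H[S]$ is the induced subgraph. Graphs carry a "twin set": a single-vertex graph on $x$ has twin set $\{x\}$. For vertex-disjoint graphs $G_l,G_r$ with twin sets $TS(G_l),TS(G_r)$: the true twin operation $G_l\otimes G_r$ has vertex set $V(G_l)\cup V(G_r)$, edge set $E(G_l)\cup E(G_r)\cup\{uw: u\in TS(G_l), w\in TS(G_r)\}$ and twin set $TS(G_l)\cup TS(G_r)$; the false twin operation $G_l\odot G_r$ has vertex set $V(G_l)\cup V(G_r)$, edge set $E(G_l)\cup E(G_r)$, twin set $TS(G_l)\cup TS(G_r)$; the attachment operation $G_l\oplus G_r$ has the same vertex and edge sets as $G_l\otimes G_r$ and twin set $TS(G_l)$. A decomposition tree $T$ of $G$ is a rooted binary tree whose leaves are in bijection with $V(G)$, each internal node having a left and a right child and a label in $\{\otimes,\odot,\oplus\}$; for each node $v$ define $\hat G(v)$ and $\hat{TS}(v)$ recursively: for a leaf $x$, the single-vertex graph on $x$ with twin set $\{x\}$; for an internal node $v$ with label $\circ$ and children $v_l,v_r$, $\hat G(v)=\hat G(v_l)\circ\hat G(v_r)$ with the corresponding twin set; one requires $\hat G(\text{root})=G$. Then $\hat G(v)$ is the subgraph of $G$ induced by the set $\hat V(v)$ of leaves below $v$. For a node $v$ and $0\le k\le|\hat{TS}(v)|$, call $S\subseteq\hat V(v)$ $k$-feasible if $\hat V(v)\setminus\hat{TS}(v)\subseteq N_{\hat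 G(v)}[S]$ and there is $X\subseteq S\cap\hat{TS}(v)$ with $|X|=k$ such that $\hat G(v)[S\setminus X]$ has a perfect matching. $\hat\gamma_k(v)$ is the minimum size of a $k$-feasible set. $\hat{min}(v)=\min\{\hat\gamma_k(v):0\le k\le|\hat{TS}(v)|\}$, and $\hat\alpha(v)$, $\hat\beta(v)$ are the smallest and the largest $k$ with $\hat\gamma_k(v)=\hat{min}(v)$. *)

theory Defs
  imports Main
begin

definition simple_graph :: "'a set \<Rightarrow> 'a set set \<Rightarrow> bool" where
  "simple_graph V E \<longleftrightarrow> finite V \<and> (\<forall>e\<in>E. \<exists>x y. x \<in> V \<and> y \<in> V \<and> x \<noteq> y \<and> e = {x, y})"

definition walk_len :: "'a set \<Rightarrow> 'a set set \<Rightarrow> 'a \<Rightarrow> 'a \<Rightarrow> nat \<Rightarrow> bool" where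
  "walk_len W E u v n \<longleftrightarrow> (\<exists>xs. xs \<noteq> [] \<and> hd xs = u \<and> last xs = v \<and> set xs \<subseteq> W
      \<and> successively (\<lambda>x y. {x, y} \<in> E) xs \<and> length xs = Suc n)"

definition gdist :: "'a set \<Rightarrow> 'a set set \<Rightarrow> 'a \<Rightarrow> 'a \<Rightarrow> nat" where
  "gdist W E u v = (LEAST n. walk_len W E u v n)"

definition connected_on :: "'a set \<Rightarrow> 'a set set \<Rightarrow> bool" where
  "connected_on W E \<longleftrightarrow> (\<forall>u\<in>W. \<forall>v\<in>W. \<exists>n. walk_len W E u v n)"

definition distance_hereditary :: "'a set \<Rightarrow> 'a set set \<Rightarrow> bool" where
  "distance_hereditary V E \<longleftrightarrow> simple_graph V E \<and>
     (\<forall>W. W \<subseteq> V \<and> W \<noteq> {} \<and> connected_on W E \<longrightarrow>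
        (\<forall>u\<in>W. \<forall>v\<in>W. gdist W E u v = gdist V E u v))"

definition closed_nbhd :: "'a set \<Rightarrow> 'a set set \<Rightarrow> 'a set \<Rightarrow> 'a set" where
  "closed_nbhd V E S = S \<union> {x \<in> V. \<exists>s\<in>S. {x, s} \<in> E}"

definition has_perfect_matching_on :: "'a set set \<Rightarrow> 'a set \<Rightarrow> bool" where
  "has_perfect_matching_on E W \<longleftrightarrow> (\<exists>M \<subseteq> E. (\<forall>e\<in>M. e \<subseteq> W)
      \<and> (\<forall>e1\<in>M. \<forall>e2\<in>M. e1 \<noteq> e2 \<longrightarrow> e1 \<inter> e2 = {}) \<and> \<Union>M = W)"

datatype dt_op = TrueTwin | FalseTwin | Attach

datatype 'a dtree = Leaf 'a | Node dt_op "'a dtree" "'a dtree"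

fun tverts :: "'a dtree \<Rightarrow> 'a set" where
  "tverts (Leaf x) = {x}"
| "tverts (Node _ l r) = tverts l \<union> tverts r"

fun tts :: "'a dtree \<Rightarrow> 'a set" where
  "tts (Leaf x) = {x}"
| "tts (Node TrueTwin l r) = tts l \<union> tts r"
| "tts (Node FalseTwin l r) = tts l \<union> tts r"
| "tts (Node Attach l r) = tts l"

fun tedges :: "'a dtree \<Rightarrow> 'a set set" where
  "tedges (Leaf x) = {}"
| "tedges (Node FalseTwin l r) = tedges l \<union> tedges r"
| "tedges (Node _ l r) = tedges l \<union> tedges r \<union> {{u, w} | u w. u \<in> tts l \<and> w \<in> tts r}"

text \<open>Leaves are in bijection with vertices: children have disjoint leaf sets.\<close>
fun dt_wf :: "'a dtree \<Rightarrow> bool" where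
  "dt_wf (Leaf x) = True"
| "dt_wf (Node _ l r) = (dt_wf l \<and> dt_wf r \<and> tverts l \<inter> tverts r = {})"

fun subtrees :: "'a dtree \<Rightarrow> 'a dtree set" where
  "subtrees (Leaf x) = {Leaf x}"
| "subtrees (Node c l r) = insert (Node c l r) (subtrees l \<union> subtrees r)"

definition is_decomposition_tree :: "'a dtree \<Rightarrow> 'a set \<Rightarrow> 'a set set \<Rightarrow> bool" where
  "is_decomposition_tree T V E \<longleftrightarrow> dt_wf T \<and> tverts T = V \<and> tedges T = E"

definition is_internal :: "'a dtree \<Rightarrow> bool" where
  "is_internal v \<longleftrightarrow> (\<exists>c l r. v = Node c l r)"

definition k_feasible :: "'a dtree \<Rightarrow> nat \<Rightarrow> 'a set \<Rightarrow> bool" where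
  "k_feasible v k S \<longleftrightarrow> S \<subseteq> tverts v
     \<and> tverts v - tts v \<subseteq> closed_nbhd (tverts v) (tedges v) S
     \<and> (\<exists>X. X \<subseteq> S \<inter> tts v \<and> card X = k \<and> has_perfect_matching_on (tedges v) (S - X))"

definition hgamma :: "'a dtree \<Rightarrow> nat \<Rightarrow> nat" where
  "hgamma v k = Inf (card ` {S. k_feasible v k S})"

definition hmin :: "'a dtree \<Rightarrow> nat" where
  "hmin v = Min (hgamma v ` {0..card (tts v)})"

definition halpha :: "'a dtree \<Rightarrow> nat" where
  "halpha v = Min {k. k \<le> card (tts v) \<and> hgamma v k = hmin v}"

definition hbeta :: "'a dtree \<Rightarrow> nat" where
  "hbeta v = Max {k. k \<le> card (tts v) \<and> hgamma v k = hmin v}"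

end

theory Submission
  imports Defs
begin

text \<open>Moving one twin vertex into or out of the exempt set X, and repairing the matching
  and the domination by one added or removed vertex, turns a k-feasible set into a
  (k+1)- or (k-1)-feasible set with at most one more vertex. Hence k \<mapsto> \<gamma>(k) changes by
  at most one per step, and since S - X has a perfect matching, \<gamma>(k) + k is even.
  A function with unit steps and this parity is pinned down by its values at 0, |TS|
  and at the even offsets from \<alpha>, which is what the hypotheses provide.\<close>

lemma finite_tverts: "finite (tverts t)"
  by (induction t) auto

lemma tts_subset_tverts: "tts t \<subseteq> tverts t"
  by (induction t rule: tts.induct) auto

lemma tts_nonempty: "tts t \<noteq> {}"
  by (induction t rule: tts.induct) auto

lemma tedges_subset_tverts: "e \<in> tedges t \<Longrightarrow> e \<subseteq> tverts t"
  using tts_subset_tverts by (induction t rule: tedges.induct) fastforce+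

lemma finite_tedges: "finite (tedges t)"
proof -
  have "tedges t \<subseteq> Pow (tverts t)"
    using tedges_subset_tverts by blast
  then show ?thesis
    by (rule finite_subset) (simp add: finite_tverts)
qed

lemma card_tedges: "dt_wf t \<Longrightarrow> e \<in> tedges t \<Longrightarrow> card e = 2"
proof (induction t)
  case (Node c l r)
  have "u \<noteq> w" if "u \<in> tts l" "w \<in> tts r" for u w
    using that tts_subset_tverts[of l] tts_subset_tverts[of r] Node.prems(1) by auto
  with Node show ?case by (cases c) auto
qed simp

lemma tedges_neighbour: "z \<in> tverts t - tts t \<Longrightarrow> \<exists>w. {z, w} \<in> tedges t"
proof (induction t)
  case (Node c l r)
  have subtree_edges: "tedges l \<union> tedges r \<subseteq> tedges (Node c l r)"
    by (cases c) auto
  show ?case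
  proof (cases "c = Attach \<and> z \<in> tts r")
    case True
    obtain u where "u \<in> tts l" using tts_nonempty[of l] by blast
    with True show ?thesis by (auto simp: insert_commute)
  next
    case False
    with Node.prems have "z \<in> tverts l - tts l \<or> z \<in> tverts r - tts r"
      by (cases c) auto
    with Node.IH subtree_edges show ?thesis by blast
  qed
qed simp

lemma dt_wf_subtree: "t \<in> subtrees T \<Longrightarrow> dt_wf T \<Longrightarrow> dt_wf t"
  by (induction T) auto

lemma has_perfect_matching_on_iff:
  "has_perfect_matching_on E W \<longleftrightarrow> (\<exists>M \<subseteq> E. pairwise disjnt M \<and> \<Union>M = W)"
  unfolding has_perfect_matching_on_def pairwise_def disjnt_def by blast

lemma has_perfect_matching_on_insert_edge:
  assumes "has_perfect_matching_on E W" "{a, b} \<in> E" "a \<notin> W" "b \<notin> W"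
  shows "has_perfect_matching_on E (insert a (insert b W))"
proof -
  obtain M where M: "M \<subseteq> E" "pairwise disjnt M" "\<Union>M = W"
    using assms(1) by (auto simp: has_perfect_matching_on_iff)
  have "pairwise disjnt (insert {a, b} M)"
    using M assms(3,4) by (auto simp: pairwise_insert disjnt_def)
  with M assms(2) show ?thesis
    by (auto simp: has_perfect_matching_on_iff intro!: exI[of _ "insert {a, b} M"])
qed

lemma has_perfect_matching_on_remove_edge:
  assumes "has_perfect_matching_on E W" "x \<in> W" "\<And>e. e \<in> E \<Longrightarrow> card e = 2"
  obtains y where "{x, y} \<in> E" "y \<in> W" "y \<noteq> x" "has_perfect_matching_on E (W - {x, y})"
proof -
  obtain M where M: "M \<subseteq> E" "pairwise disjnt M" "\<Union>M = W"
    using assms(1) by (auto simp: has_perfect_matching_on_iff)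
  then obtain e where e: "e \<in> M" "x \<in> e" using assms(2) by blast
  then obtain y where y: "e = {x, y}" "y \<noteq> x"
    using assms(3) M(1) by (auto simp: card_2_iff doubleton_eq_iff)
  have "\<Union>(M - {e}) = W - e"
    using M e by (auto simp: pairwise_def disjnt_def)
  moreover have "pairwise disjnt (M - {e})"
    using M(2) by (rule pairwise_subset) blast
  ultimately have "has_perfect_matching_on E (W - {x, y})"
    using M(1) y(1) by (auto simp: has_perfect_matching_on_iff intro!: exI[of _ "M - {e}"])
  with that y e M show ?thesis by blast
qed

lemma even_card_if_has_perfect_matching_on:
  assumes "has_perfect_matching_on E W" "finite W" "\<And>e. e \<in> E \<Longrightarrow> card e = 2"
  shows "even (card W)"
proof -
  obtain M where M: "M \<subseteq> E" "pairwise disjnt M" "\<Union>M = W"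
    using assms(1) by (auto simp: has_perfect_matching_on_iff)
  have "card W = sum card M"
    using M assms(3) card_Union_disjoint[of M] by (fastforce intro: card_ge_0_finite)
  also have "\<dots> = 2 * card M"
    using M(1) assms(3) by (simp add: subset_eq)
  finally show ?thesis by simp
qed

lemma maximal_matching_avoiding:
  assumes "finite E"
  obtains M where "M \<subseteq> E" "pairwise disjnt M" "\<And>e. e \<in> M \<Longrightarrow> e \<inter> A = {}"
    "\<And>e. e \<in> E \<Longrightarrow> e \<noteq> {} \<Longrightarrow> e \<inter> (A \<union> \<Union>M) \<noteq> {}"
proof -
  define matchings where "matchings = {M. M \<subseteq> E \<and> pairwise disjnt M \<and> (\<forall>e\<in>M. e \<inter> A = {})}"
  have "matchings \<subseteq> Pow E"
    unfolding matchings_def by blast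
  then have "finite matchings"
    by (rule finite_subset) (simp add: assms)
  moreover have "{} \<in> matchings"
    unfolding matchings_def by simp
  ultimately obtain M where M: "M \<in> matchings"
    and maximal: "\<And>M'. M' \<in> matchings \<Longrightarrow> M \<subseteq> M' \<Longrightarrow> M = M'"
    using finite_has_maximal[of matchings] by blast
  have M_props: "M \<subseteq> E" "pairwise disjnt M" "\<And>e. e \<in> M \<Longrightarrow> e \<inter> A = {}"
    using M unfolding matchings_def by auto
  moreover have "e \<inter> (A \<union> \<Union>M) \<noteq> {}" if e: "e \<in> E" "e \<noteq> {}" for e
  proof
    assume avoids: "e \<inter> (A \<union> \<Union>M) = {}"
    then have "insert e M \<in> matchings"
      using M_props e(1) unfolding matchings_def by (auto simp: pairwise_insert disjnt_def)
    with maximal[of "insert e M"] have "e \<in> M" by blast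
    with avoids e(2) show False by blast
  qed
  ultimately show thesis by (rule that)
qed

lemma closed_nbhd_mono: "S \<subseteq> S' \<Longrightarrow> closed_nbhd V E S \<subseteq> closed_nbhd V E S'"
  unfolding closed_nbhd_def by blast

lemma closed_nbhd_Diff_singleton:
  assumes "A \<subseteq> closed_nbhd V E S" "A \<subseteq> V"
    and closed: "\<And>w. {u, w} \<in> E \<Longrightarrow> w \<in> S"
    and "u \<in> A \<Longrightarrow> \<exists>s \<in> S - {u}. {u, s} \<in> E"
  shows "A \<subseteq> closed_nbhd V E (S - {u})"
proof
  fix z assume z: "z \<in> A"
  show "z \<in> closed_nbhd V E (S - {u})"
  proof (cases "z = u")
    case True
    with assms(2,4) z show ?thesis by (auto simp: closed_nbhd_def)
  next
    case False
    from z assms(1) have "z \<in> S \<or> (\<exists>s \<in> S. {z, s} \<in> E)" by (auto simp: closed_nbhd_def)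
    with False closed assms(2) z show ?thesis
      by (auto simp: closed_nbhd_def insert_commute)
  qed
qed

lemma le_add_diff_of_unit_increments:
  fixes g :: "nat \<Rightarrow> nat"
  assumes "\<And>k. i \<le> k \<Longrightarrow> k < j \<Longrightarrow> g (Suc k) \<le> g k + 1" "i \<le> j"
  shows "g j \<le> g i + (j - i)"
  using assms(2,1)
proof (induction j rule: dec_induct)
  case (step j)
  then have "g (Suc j) \<le> g j + 1" "g j \<le> g i + (j - i)" by simp_all
  with step(1) show ?case by linarith
qed simp

lemma le_add_diff_of_unit_decrements:
  fixes g :: "nat \<Rightarrow> nat"
  assumes "\<And>k. i \<le> k \<Longrightarrow> k < j \<Longrightarrow> g k \<le> g (Suc k) + 1" "i \<le> j"
  shows "g i \<le> g j + (j - i)"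
  using assms(2,1)
proof (induction i rule: inc_induct)
  case (step i)
  then have "g i \<le> g (Suc i) + 1" "g (Suc i) \<le> g j + (j - Suc i)" by simp_all
  with step(2) show ?case by linarith
qed simp

lemma unit_step_parity_profile:
  fixes g :: "nat \<Rightarrow> nat"
  assumes up: "\<And>k. k < n \<Longrightarrow> g (Suc k) \<le> g k + 1"
    and down: "\<And>k. k < n \<Longrightarrow> g k \<le> g (Suc k) + 1"
    and parity: "\<And>k. k \<le> n \<Longrightarrow> even (g k + k)"
    and minimal: "\<And>k. k \<le> n \<Longrightarrow> m \<le> g k"
    and "a \<le> b" "b \<le> n" "g b = m"
    and left: "g 0 = m + a"
    and right: "g n = m + n - b"
    and middle: "\<And>i. 2 * i \<le> b - a \<Longrightarrow> g (a + 2 * i) = m"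
    and "k \<le> n"
  shows "g k = (if k \<le> a then m + a - k else if b \<le> k then m + k - b
                else if even (k - a) then m else m + 1)"
proof -
  have increase: "g j \<le> g i + (j - i)" if "i \<le> j" "j \<le> n" for i j
    using that up by (intro le_add_diff_of_unit_increments) auto
  have decrease: "g i \<le> g j + (j - i)" if "i \<le> j" "j \<le> n" for i j
    using that down by (intro le_add_diff_of_unit_decrements) auto
  have g_a: "g a = m"
    using middle[of 0] by simp
  consider "k \<le> a" | "\<not> k \<le> a" "b \<le> k" | "a < k" "k < b" "even (k - a)" | "a < k" "k < b" "odd (k - a)"
    by linarith
  then show ?thesis
  proof cases
    case 1
    with decrease[of k a] decrease[of 0 k] assms(5,6) \<open>k \<le> n\<close> g_a left
    show ?thesis by simp
  next
    case 2
    with increase[of b k] increase[of k n] assms(6,7) \<open>k \<le> n\<close> right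
    show ?thesis by simp
  next
    case 3
    define i where "i = (k - a) div 2"
    with 3 have "k = a + 2 * i" by simp
    with 3 middle[of i] show ?thesis by simp
  next
    case 4
    define i where "i = (k - a) div 2"
    with 4 have i: "k = Suc (a + 2 * i)"
      using odd_two_times_div_two_succ[of "k - a"] by simp
    with 4 have "g (a + 2 * i) = m" by (intro middle) simp
    with up[of "a + 2 * i"] i \<open>k \<le> n\<close> have "g k \<le> m + 1" by simp
    moreover have "g k \<noteq> m"
      using parity[of k] parity[of a] g_a i assms(5,6) \<open>k \<le> n\<close> by auto
    ultimately show ?thesis
      using minimal[OF \<open>k \<le> n\<close>] 4 by simp
  qed
qed

lemma k_feasible_Suc_imp_k_feasible:
  assumes "k_feasible v (Suc k) S"
  obtains S' where "k_feasible v k S'" "card S' \<le> card S + 1"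
proof -
  obtain X where S: "S \<subseteq> tverts v"
    and dom: "tverts v - tts v \<subseteq> closed_nbhd (tverts v) (tedges v) S"
    and X: "X \<subseteq> S \<inter> tts v" "card X = Suc k"
    and pm: "has_perfect_matching_on (tedges v) (S - X)"
    using assms unfolding k_feasible_def by blast
  obtain u where u: "u \<in> X"
    using card_eq_SucD[OF X(2)] by blast
  have card_X': "card (X - {u}) = k"
    using X u by simp
  show thesis
  proof (cases "\<exists>w. {u, w} \<in> tedges v \<and> w \<notin> S")
    case True
    then obtain w where w: "{u, w} \<in> tedges v" "w \<notin> S" by blast
    have "insert w S - (X - {u}) = insert u (insert w (S - X))"
      using u X(1) w(2) by auto
    moreover have "has_perfect_matching_on (tedges v) (insert u (insert w (S - X)))"
      using pm w u by (intro has_perfect_matching_on_insert_edge) auto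
    moreover have "closed_nbhd (tverts v) (tedges v) S \<subseteq> closed_nbhd (tverts v) (tedges v) (insert w S)"
      by (rule closed_nbhd_mono) blast
    ultimately have "k_feasible v k (insert w S)"
      unfolding k_feasible_def using S dom X card_X' tedges_subset_tverts[OF w(1)]
      by (intro conjI exI[of _ "X - {u}"]) auto
    with that show thesis
      using finite_subset[OF S finite_tverts] by (simp add: card_insert_if)
  next
    case False
    then have "tverts v - tts v \<subseteq> closed_nbhd (tverts v) (tedges v) (S - {u})"
      using dom u X(1) by (intro closed_nbhd_Diff_singleton) auto
    moreover have "S - {u} - (X - {u}) = S - X"
      using u by blast
    ultimately have "k_feasible v k (S - {u})"
      unfolding k_feasible_def using S X card_X' pm
      by (intro conjI exI[of _ "X - {u}"]) auto
    with that show thesis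
      by (meson card_Diff1_le le_add1 order_trans)
  qed
qed

lemma k_feasible_imp_k_feasible_Suc:
  assumes wf: "dt_wf v" and "k_feasible v k S" "k < card (tts v)"
  obtains S' where "k_feasible v (Suc k) S'" "card S' \<le> card S + 1"
proof -
  obtain X where S: "S \<subseteq> tverts v"
    and dom: "tverts v - tts v \<subseteq> closed_nbhd (tverts v) (tedges v) S"
    and X: "X \<subseteq> S \<inter> tts v" "card X = k"
    and pm: "has_perfect_matching_on (tedges v) (S - X)"
    using assms(2) unfolding k_feasible_def by blast
  have fin_S: "finite S"
    using finite_subset[OF S finite_tverts] .
  have fin_X: "finite X"
    using X(1) fin_S by (meson finite_subset le_infE)
  have dom_insert: "tverts v - tts v \<subseteq> closed_nbhd (tverts v) (tedges v) (insert w S)" for w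
    using dom closed_nbhd_mono[of S "insert w S"] by blast
  show thesis
  proof (cases "tts v \<subseteq> S")
    case False
    then obtain z where z: "z \<in> tts v" "z \<notin> S" by blast
    with X(1) have "z \<notin> X" by blast
    with z have "k_feasible v (Suc k) (insert z S)"
      unfolding k_feasible_def using S X pm dom_insert tts_subset_tverts[of v] fin_X
      by (intro conjI exI[of _ "insert z X"]) (auto simp: insert_Diff_if)
    with that show thesis
      using fin_S z(2) by simp
  next
    case True
    have "\<not> tts v \<subseteq> X"
      using X(2) assms(3) card_mono[OF fin_X] by (meson not_le)
    then obtain x where x: "x \<in> tts v" "x \<notin> X" by blast
    with True have "x \<in> S - X" by blast
    with pm obtain y where y: "{x, y} \<in> tedges v" "y \<in> S - X" "y \<noteq> x"
      and pm_xy: "has_perfect_matching_on (tedges v) (S - X - {x, y})"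
      using card_tedges[OF wf] by (rule has_perfect_matching_on_remove_edge)
    have X': "insert x X \<subseteq> S \<inter> tts v" "card (insert x X) = Suc k"
      using X x \<open>x \<in> S - X\<close> fin_X by auto
    show thesis
    proof (cases "\<exists>w. {y, w} \<in> tedges v \<and> w \<notin> S")
      case True
      then obtain w where w: "{y, w} \<in> tedges v" "w \<notin> S" by blast
      have "insert w S - insert x X = insert y (insert w (S - X - {x, y}))"
        using y w(2) \<open>x \<in> S - X\<close> X(1) by auto
      moreover have "has_perfect_matching_on (tedges v) (insert y (insert w (S - X - {x, y})))"
        using pm_xy w by (intro has_perfect_matching_on_insert_edge) auto
      ultimately have "k_feasible v (Suc k) (insert w S)"
        unfolding k_feasible_def using S X' dom_insert tedges_subset_tverts[OF w(1)]
        by (intro conjI exI[of _ "insert x X"]) auto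
      with that show thesis
        using fin_S w(2) by simp
    next
      case False
      have "{y, x} \<in> tedges v"
        using y(1) by (simp add: insert_commute)
      then have "tverts v - tts v \<subseteq> closed_nbhd (tverts v) (tedges v) (S - {y})"
        using dom False \<open>x \<in> S - X\<close> y(3) by (intro closed_nbhd_Diff_singleton) auto
      moreover have "S - {y} - insert x X = S - X - {x, y}"
        by blast
      ultimately have "k_feasible v (Suc k) (S - {y})"
        unfolding k_feasible_def using S X' pm_xy y(2,3)
        by (intro conjI exI[of _ "insert x X"]) auto
      with that show thesis
        by (meson card_Diff1_le le_add1 order_trans)
    qed
  qed
qed

lemma k_feasible_card_tts: "\<exists>S. k_feasible v (card (tts v)) S"
proof -
  obtain M where M: "M \<subseteq> tedges v" "pairwise disjnt M" "\<And>e. e \<in> M \<Longrightarrow> e \<inter> tts v = {}"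
    and maximal: "\<And>e. e \<in> tedges v \<Longrightarrow> e \<noteq> {} \<Longrightarrow> e \<inter> (tts v \<union> \<Union>M) \<noteq> {}"
    using maximal_matching_avoiding[OF finite_tedges, of v "tts v"] by blast
  define S where "S = tts v \<union> \<Union>M"
  have S_minus_tts: "S - tts v = \<Union>M"
    using M(3) unfolding S_def by blast
  have "tverts v - tts v \<subseteq> closed_nbhd (tverts v) (tedges v) S"
  proof
    fix z assume z: "z \<in> tverts v - tts v"
    then obtain w where w: "{z, w} \<in> tedges v"
      using tedges_neighbour[OF z] by blast
    with maximal[of "{z, w}"] have "z \<in> S \<or> w \<in> S"
      unfolding S_def by blast
    with z w show "z \<in> closed_nbhd (tverts v) (tedges v) S"
      unfolding closed_nbhd_def by (auto simp: insert_commute)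
  qed
  moreover have "has_perfect_matching_on (tedges v) (S - tts v)"
    unfolding has_perfect_matching_on_iff S_minus_tts using M(1,2) by blast
  moreover have "S \<subseteq> tverts v"
    using M(1) tts_subset_tverts[of v] tedges_subset_tverts[of _ v] unfolding S_def by blast
  moreover have "tts v \<subseteq> S"
    unfolding S_def by blast
  ultimately have "k_feasible v (card (tts v)) S"
    unfolding k_feasible_def by (intro conjI exI[of _ "tts v"]) auto
  then show ?thesis ..
qed

lemma k_feasible_exists: "k \<le> card (tts v) \<Longrightarrow> \<exists>S. k_feasible v k S"
proof (induction k rule: inc_induct)
  case base
  show ?case by (rule k_feasible_card_tts)
next
  case (step k)
  then show ?case by (meson k_feasible_Suc_imp_k_feasible)
qed

lemma hgamma_le_card: "k_feasible v k S \<Longrightarrow> hgamma v k \<le> card S"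
  unfolding hgamma_def by (rule cInf_lower) auto

text \<open>hgamma is an Inf over naturals, which is 0 on the empty set; k_feasible_exists rules this out.\<close>

lemma hgamma_attained:
  assumes "k \<le> card (tts v)"
  obtains S where "k_feasible v k S" "card S = hgamma v k"
proof -
  have "card ` {S. k_feasible v k S} \<noteq> {}"
    using k_feasible_exists[OF assms] by blast
  then have "hgamma v k \<in> card ` {S. k_feasible v k S}"
    unfolding hgamma_def by (rule Inf_nat_def1)
  with that show thesis by auto
qed

lemma hgamma_Suc_le:
  assumes wf: "dt_wf v" and "k < card (tts v)"
  shows "hgamma v (Suc k) \<le> hgamma v k + 1"
proof -
  from assms(2) have "k \<le> card (tts v)" by simp
  then obtain S where S: "k_feasible v k S" "card S = hgamma v k"
    by (rule hgamma_attained)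
  obtain S' where "k_feasible v (Suc k) S'" "card S' \<le> card S + 1"
    using wf S(1) assms(2) by (rule k_feasible_imp_k_feasible_Suc)
  with S(2) show ?thesis
    using hgamma_le_card by fastforce
qed

lemma hgamma_le_Suc:
  assumes "k < card (tts v)"
  shows "hgamma v k \<le> hgamma v (Suc k) + 1"
proof -
  from assms have "Suc k \<le> card (tts v)" by simp
  then obtain S where S: "k_feasible v (Suc k) S" "card S = hgamma v (Suc k)"
    by (rule hgamma_attained)
  obtain S' where "k_feasible v k S'" "card S' \<le> card S + 1"
    using S(1) by (rule k_feasible_Suc_imp_k_feasible)
  with S(2) show ?thesis
    using hgamma_le_card by fastforce
qed

lemma even_card_add_if_k_feasible:
  assumes wf: "dt_wf v" and "k_feasible v k S"
  shows "even (card S + k)"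
proof -
  from assms(2) obtain X where S: "S \<subseteq> tverts v" and X: "X \<subseteq> S" "card X = k"
    and pm: "has_perfect_matching_on (tedges v) (S - X)"
    unfolding k_feasible_def by blast
  have fin_S: "finite S"
    using finite_subset[OF S finite_tverts] .
  have "even (card (S - X))"
    using pm finite_Diff[OF fin_S] card_tedges[OF wf] by (rule even_card_if_has_perfect_matching_on)
  moreover have "card S = card (S - X) + k"
    using X card_Diff_subset[OF finite_subset[OF X(1) fin_S] X(1)] card_mono[OF fin_S X(1)] by simp
  ultimately show ?thesis by simp
qed

lemma even_hgamma_add:
  assumes wf: "dt_wf v" and "k \<le> card (tts v)"
  shows "even (hgamma v k + k)"
proof -
  from assms(2) obtain S where "k_feasible v k S" "card S = hgamma v k"
    by (rule hgamma_attained)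
  then show ?thesis
    using even_card_add_if_k_feasible[OF wf] by fastforce
qed

lemma hmin_le_hgamma: "k \<le> card (tts v) \<Longrightarrow> hmin v \<le> hgamma v k"
  unfolding hmin_def by (intro Min_le) auto

lemma hmin_attained: "\<exists>k \<le> card (tts v). hgamma v k = hmin v"
proof -
  have "hmin v \<in> hgamma v ` {0..card (tts v)}"
    unfolding hmin_def by (intro Min_in) auto
  then show ?thesis by force
qed

lemma hbeta_minimiser: "hbeta v \<le> card (tts v)" "hgamma v (hbeta v) = hmin v"
proof -
  have "hbeta v \<in> {k. k \<le> card (tts v) \<and> hgamma v k = hmin v}"
    unfolding hbeta_def using hmin_attained by (intro Max_in) auto
  then show "hbeta v \<le> card (tts v)" "hgamma v (hbeta v) = hmin v" by simp_all
qed

lemma halpha_le_hbeta: "halpha v \<le> hbeta v"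
  unfolding halpha_def using hbeta_minimiser by (intro Min_le) auto

theorem corollary1:
  fixes T v :: "'a dtree" and V :: "'a set" and E :: "'a set set"
  assumes "distance_hereditary V E"
    and "is_decomposition_tree T V E"
    and "v \<in> subtrees T" and "is_internal v"
    and "hgamma v 0 = hmin v + halpha v"
    and "hgamma v (card (tts v)) = hmin v + card (tts v) - hbeta v"
    and "\<And>i::nat. 2 * i \<le> hbeta v - halpha v \<Longrightarrow> hgamma v (halpha v + 2 * i) = hmin v"
  shows "\<forall>k \<le> card (tts v). hgamma v k =
      (if k \<le> halpha v then hmin v + halpha v - k
       else if hbeta v \<le> k then hmin v + k - hbeta v
       else if even (k - halpha v) then hmin v
       else hmin v + 1)"
proof -
  have wf: "dt_wf v"
    using assms(2,3) dt_wf_subtree unfolding is_decomposition_tree_def by blast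
  show ?thesis
    by (intro allI impI)
      (rule unit_step_parity_profile[OF hgamma_Suc_le[OF wf] hgamma_le_Suc even_hgamma_add[OF wf]
          hmin_le_hgamma halpha_le_hbeta hbeta_minimiser assms(5-7)])
qed

end
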